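(* Let $A$ be a real matrix with $m$ rows, and let $S, T$ be finite sets of unit vectors in $\mathbb{R}^m$ with $S$ nonempty, $f_A(S) \ge f_A(T)$ and $f_A(S) > 0$. Then there exists $v \in S$ such that $$f_A(T \cup \{v\}) - f_A(T) \ge \sigma_{\min}(S)\, \frac{\big(f_A(S) - f_A(T)\big)^2}{4|S|\, f_A(S)}.$$
   Context: For a finite set $V$ of vectors in $\mathbb{R}^m$, $\Pi_V$ denotes the orthogonal projector onto $\mathrm{span}(V)$, and for a matrix $M$ with $m$ rows, $f_M(V) = \|\Pi_V M\|_F^2$. For a finite set $V$ of unit vectors, $\sigma_{\min}(V)$ is the smallest squared singular value of the matrix with columns $V$, i.e. $\inf_{\|x\|_2 = 1} \|Mx\|_2^2$ for that matrix $M$. *)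

theory Defs
  imports "HOL-Analysis.Analysis"
begin

definition proj_span :: "('a::euclidean_space) set \<Rightarrow> 'a \<Rightarrow> 'a" where
  "proj_span V x = (THE p. p \<in> span V \<and> (\<forall>w\<in>span V. (x - p) \<bullet> w = 0))"

definition proj_matrix :: "(real^'m) set \<Rightarrow> real^'m^'m" where
  "proj_matrix V = matrix (proj_span V)"

definition frob_sq :: "real^'n^'m \<Rightarrow> real" where
  "frob_sq M = (\<Sum>i\<in>UNIV. \<Sum>j\<in>UNIV. (M $ i $ j)^2)"

definition f_mat :: "real^'n^'m \<Rightarrow> (real^'m) set \<Rightarrow> real" where
  "f_mat M V = frob_sq (proj_matrix V ** M)"

text \<open>Smallest squared singular value of the matrix whose columns are the
  vectors of V (columns indexed by V itself): inf over unit x of ||M x||^2.\<close>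
definition sigma_min :: "(real^'m) set \<Rightarrow> real" where
  "sigma_min V = Inf {(norm (\<Sum>v\<in>V. x v *\<^sub>R v))^2 | x. (\<Sum>v\<in>V. (x v)^2) = 1}"

end

theory Submission
  imports Defs
begin

text \<open>Let \<open>a\<^sub>j\<close> be the columns of \<open>A\<close> and \<open>e\<^sub>j = a\<^sub>j - \<Pi>\<^sub>T a\<^sub>j\<close> their residuals
  with respect to \<open>T\<close>. Since \<open>|\<Pi>\<^sub>S a|\<^sup>2 - |\<Pi>\<^sub>T a|\<^sup>2 \<le> 2 \<langle>\<Pi>\<^sub>S a, \<Pi>\<^sub>S e\<rangle>\<close>,
  Cauchy-Schwarz gives \<open>(f\<^sub>A(S) - f\<^sub>A(T))\<^sup>2 \<le> 4 f\<^sub>A(S) \<Sum>\<^sub>j |\<Pi>\<^sub>S e\<^sub>j|\<^sup>2\<close>.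
  Expanding \<open>\<Pi>\<^sub>S e\<^sub>j\<close> in the vectors of \<open>S\<close>, the definition of \<open>\<sigma>\<^sub>m\<^sub>i\<^sub>n(S)\<close> bounds
  \<open>\<sigma>\<^sub>m\<^sub>i\<^sub>n(S) |\<Pi>\<^sub>S e\<^sub>j|\<^sup>2\<close> by \<open>\<Sum>\<^sub>v\<^sub>\<in>\<^sub>S \<langle>v, e\<^sub>j\<rangle>\<^sup>2\<close>, so some \<open>v \<in> S\<close> has
  \<open>\<Sum>\<^sub>j \<langle>v, e\<^sub>j\<rangle>\<^sup>2\<close> at least the average, which is the claimed bound. Finally, adding a
  unit vector \<open>v\<close> to \<open>T\<close> raises \<open>|\<Pi> a\<^sub>j|\<^sup>2\<close> by at least \<open>\<langle>v, e\<^sub>j\<rangle>\<^sup>2\<close>, as one sees by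
  projecting \<open>e\<^sub>j\<close> onto the new direction \<open>v - \<Pi>\<^sub>T v\<close>.\<close>

lemma proj_span_char:
  fixes V :: "'a::euclidean_space set"
  shows "proj_span V x \<in> span V \<and> (\<forall>w\<in>span V. (x - proj_span V x) \<bullet> w = 0)"
proof -
  let ?P = "\<lambda>p. p \<in> span V \<and> (\<forall>w\<in>span V. (x - p) \<bullet> w = 0)"
  obtain y z where y: "y \<in> span V" and z: "\<And>w. w \<in> span V \<Longrightarrow> orthogonal z w"
    and xyz: "x = y + z" using orthogonal_subspace_decomp_exists[of V x] by blast
  have ex: "?P y"
    using y z xyz by (simp add: orthogonal_def)
  have uniq: "p = y" if "?P p" for p
  proof -
    have "p - y \<in> span V" using that y by (intro span_diff) auto
    then have "(x - y) \<bullet> (p - y) = 0" "(x - p) \<bullet> (p - y) = 0" using ex that by auto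
    then have "(p - y) \<bullet> (p - y) = 0" by (simp add: inner_diff_left)
    then show ?thesis by simp
  qed
  show ?thesis unfolding proj_span_def by (rule theI[of ?P, OF ex uniq])
qed

lemma proj_span_in_span: "proj_span V (x::'a::euclidean_space) \<in> span V"
  using proj_span_char by blast

lemma proj_span_orthogonal: "w \<in> span V \<Longrightarrow> (x - proj_span V (x::'a::euclidean_space)) \<bullet> w = 0"
  using proj_span_char by blast

lemma proj_span_eqI:
  fixes x :: "'a::euclidean_space"
  assumes p: "p \<in> span V" and orth: "\<And>w. w \<in> span V \<Longrightarrow> (x - p) \<bullet> w = 0"
  shows "proj_span V x = p"
proof -
  let ?q = "proj_span V x"
  have "?q - p \<in> span V" by (intro span_diff p proj_span_in_span)
  then have "(x - ?q) \<bullet> (?q - p) = 0" "(x - p) \<bullet> (?q - p) = 0"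
    using proj_span_orthogonal orth by auto
  then have "(?q - p) \<bullet> (?q - p) = 0" by (simp add: inner_diff_left)
  then show ?thesis by simp
qed

lemma linear_proj_span: "linear (proj_span (V::'a::euclidean_space set))"
proof (rule linearI)
  fix x y :: 'a
  show "proj_span V (x + y) = proj_span V x + proj_span V y"
  proof (rule proj_span_eqI)
    show "proj_span V x + proj_span V y \<in> span V" by (intro span_add proj_span_in_span)
    fix w assume "w \<in> span V"
    then have "(x - proj_span V x) \<bullet> w + (y - proj_span V y) \<bullet> w = 0"
      by (simp add: proj_span_orthogonal)
    then show "(x + y - (proj_span V x + proj_span V y)) \<bullet> w = 0"
      by (simp add: algebra_simps inner_diff_left inner_add_left)
  qed
next
  fix c :: real and x :: 'a
  show "proj_span V (c *\<^sub>R x) = c *\<^sub>R proj_span V x"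
  proof (rule proj_span_eqI)
    show "c *\<^sub>R proj_span V x \<in> span V" by (simp add: span_mul proj_span_in_span)
    fix w assume "w \<in> span V"
    then have "c * ((x - proj_span V x) \<bullet> w) = 0" by (simp add: proj_span_orthogonal)
    then show "(c *\<^sub>R x - c *\<^sub>R proj_span V x) \<bullet> w = 0"
      by (simp add: algebra_simps inner_diff_left)
  qed
qed

lemma orthogonal_sub_proj_span:
  "z \<in> span V \<Longrightarrow> orthogonal (x - proj_span V (x::'a::euclidean_space)) z"
  unfolding orthogonal_def by (rule proj_span_orthogonal)

lemma inner_proj_span_self: "proj_span V x \<bullet> (x::'a::euclidean_space) = (norm (proj_span V x))\<^sup>2"
proof -
  have "(x - proj_span V x) \<bullet> proj_span V x = 0" by (rule proj_span_orthogonal[OF proj_span_in_span])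
  then show ?thesis by (simp only: inner_diff_left inner_commute[of x] power2_norm_eq_inner)
qed

lemma inner_proj_span_left:
  "proj_span V x \<bullet> (y::'a::euclidean_space) = proj_span V x \<bullet> proj_span V y"
proof -
  have "(y - proj_span V y) \<bullet> proj_span V x = 0" by (rule proj_span_orthogonal[OF proj_span_in_span])
  then show ?thesis by (simp only: inner_diff_left inner_commute[of y] inner_commute[of "proj_span V y"])
qed

lemma norm_proj_span_pythagoras:
  "(norm (x::'a::euclidean_space))\<^sup>2 = (norm (proj_span V x))\<^sup>2 + (norm (x - proj_span V x))\<^sup>2"
proof -
  have "orthogonal (x - proj_span V x) (proj_span V x)"
    by (rule orthogonal_sub_proj_span[OF proj_span_in_span])
  from norm_add_Pythagorean[OF this] show ?thesis by simp
qed

lemma norm_sub_proj_span_le: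
  assumes "z \<in> span V"
  shows "(norm ((x::'a::euclidean_space) - proj_span V x))\<^sup>2 \<le> (norm (x - z))\<^sup>2"
proof -
  have "proj_span V x - z \<in> span V" by (intro span_diff assms proj_span_in_span)
  from norm_add_Pythagorean[OF orthogonal_sub_proj_span[OF this, of x]]
  have "(norm (x - z))\<^sup>2 = (norm (x - proj_span V x))\<^sup>2 + (norm (proj_span V x - z))\<^sup>2"
    by simp
  then show ?thesis by (metis le_add_same_cancel1 zero_le_power2)
qed

lemma f_mat_eq_sum_columns:
  fixes A :: "real^'n^'m"
  shows "f_mat A V = (\<Sum>j\<in>UNIV. (norm (proj_span V (column j A)))\<^sup>2)"
proof -
  have entry: "(proj_matrix V ** A) $ i $ j = proj_span V (column j A) $ i" for i j
  proof -
    have "(proj_matrix V ** A) $ i $ j = (proj_matrix V *v column j A) $ i"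
      by (simp add: matrix_matrix_mult_def matrix_vector_mult_def column_def)
    also have "proj_matrix V *v column j A = proj_span V (column j A)"
      unfolding proj_matrix_def by (simp add: matrix_works linear_proj_span)
    finally show ?thesis .
  qed
  have norm_sq: "(norm (v::real^'m))\<^sup>2 = (\<Sum>i\<in>UNIV. (v $ i)\<^sup>2)" for v
    unfolding power2_norm_eq_inner inner_vec_def by (simp add: power2_eq_square)
  show ?thesis
    unfolding f_mat_def frob_sq_def entry norm_sq by (rule sum.swap)
qed

lemma norm_proj_span_diff_le:
  fixes a :: "'a::euclidean_space"
  shows "(norm (proj_span S a))\<^sup>2 - (norm (proj_span T a))\<^sup>2
     \<le> 2 * (proj_span S a \<bullet> proj_span S (a - proj_span T a))"
proof -
  let ?s = "proj_span S a" and ?t = "proj_span T a"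
  have "?s \<bullet> proj_span S (a - ?t) = ?s \<bullet> a - ?s \<bullet> ?t"
    by (simp add: inner_proj_span_left[symmetric] inner_diff_right)
  moreover have "?s \<bullet> ?t = ((norm ?s)\<^sup>2 + (norm ?t)\<^sup>2 - (norm (?s - ?t))\<^sup>2) / 2"
    by (rule dot_norm_neg)
  ultimately show ?thesis
    using inner_proj_span_self[of S a] zero_le_power2[of "norm (?s - ?t)"] by argo
qed

lemma norm_proj_span_insert_ge:
  fixes a v :: "'a::euclidean_space"
  assumes "norm v \<le> 1"
  shows "(v \<bullet> (a - proj_span T a))\<^sup>2
     \<le> (norm (proj_span (insert v T) a))\<^sup>2 - (norm (proj_span T a))\<^sup>2"
proof -
  define e where "e = a - proj_span T a"
  define w where "w = v - proj_span T v"
  define l where "l = e \<bullet> w"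
  have span_T: "span T \<subseteq> span (insert v T)" by (rule span_mono) auto
  have "w \<in> span (insert v T)"
    unfolding w_def using span_T proj_span_in_span[of T v]
    by (intro span_diff) (auto intro: span_base)
  then have "proj_span T a + l *\<^sub>R w \<in> span (insert v T)"
    using span_T proj_span_in_span[of T a] by (intro span_add span_mul) auto
  from norm_sub_proj_span_le[OF this, of a]
  have "(norm (proj_span (insert v T) a))\<^sup>2 \<ge> (norm a)\<^sup>2 - (norm (e - l *\<^sub>R w))\<^sup>2"
    using norm_proj_span_pythagoras[of a "insert v T"] by (simp add: e_def algebra_simps)
  moreover have "(norm (proj_span T a))\<^sup>2 = (norm a)\<^sup>2 - (norm e)\<^sup>2"
    using norm_proj_span_pythagoras[of a T] unfolding e_def by linarith
  moreover have "(norm (e - l *\<^sub>R w))\<^sup>2 = (norm e)\<^sup>2 - 2 * l\<^sup>2 + l\<^sup>2 * (norm w)\<^sup>2"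
    unfolding power2_norm_eq_inner l_def
    by (simp add: inner_diff_left inner_diff_right inner_commute power2_eq_square algebra_simps)
  moreover have "l\<^sup>2 * (norm w)\<^sup>2 \<le> l\<^sup>2"
  proof -
    have "(norm w)\<^sup>2 \<le> (norm v)\<^sup>2"
      using norm_proj_span_pythagoras[of v T] unfolding w_def by simp
    also have "\<dots> \<le> 1" using assms by (simp add: power_le_one)
    finally show ?thesis by (simp add: mult_left_le)
  qed
  ultimately have "l\<^sup>2 \<le> (norm (proj_span (insert v T) a))\<^sup>2 - (norm (proj_span T a))\<^sup>2"
    by linarith
  moreover have "l = v \<bullet> e"
  proof -
    have "e \<bullet> proj_span T v = 0" unfolding e_def by (rule proj_span_orthogonal[OF proj_span_in_span])
    then show ?thesis unfolding l_def w_def by (simp add: inner_diff_right inner_commute)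
  qed
  ultimately show ?thesis unfolding e_def by simp
qed

lemma sigma_min_nonneg:
  fixes S :: "(real^'m) set"
  assumes "finite S" and "S \<noteq> {}"
  shows "0 \<le> sigma_min S"
proof -
  obtain v0 where v0: "v0 \<in> S" using assms by blast
  let ?x = "\<lambda>v. if v = v0 then 1 else (0::real)"
  have "(\<Sum>v\<in>S. (?x v)\<^sup>2) = (\<Sum>v\<in>S. if v = v0 then 1 else 0)"
    by (rule sum.cong) auto
  also have "\<dots> = 1" using v0 assms(1) by (simp add: sum.delta)
  finally have "(norm (\<Sum>v\<in>S. ?x v *\<^sub>R v))\<^sup>2
      \<in> {(norm (\<Sum>v\<in>S. x v *\<^sub>R v))\<^sup>2 | x. (\<Sum>v\<in>S. (x v)\<^sup>2) = 1}"
    by (intro CollectI exI[of _ ?x]) simp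
  then show ?thesis unfolding sigma_min_def by (intro cInf_greatest) auto
qed

lemma sigma_min_mult_sum_sq_le:
  fixes S :: "(real^'m) set"
  shows "sigma_min S * (\<Sum>v\<in>S. (c v)\<^sup>2) \<le> (norm (\<Sum>v\<in>S. c v *\<^sub>R v))\<^sup>2"
proof (cases "(\<Sum>v\<in>S. (c v)\<^sup>2) = 0")
  case False
  define C where "C = (\<Sum>v\<in>S. (c v)\<^sup>2)"
  have C_pos: "C > 0" using False sum_nonneg[of S "\<lambda>v. (c v)\<^sup>2"] unfolding C_def by fastforce
  define x where "x = (\<lambda>v. c v / sqrt C)"
  have "(\<Sum>v\<in>S. (x v)\<^sup>2) = (\<Sum>v\<in>S. (c v)\<^sup>2) / C"
    unfolding x_def using C_pos by (simp add: power_divide sum_divide_distrib)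
  then have unit: "(\<Sum>v\<in>S. (x v)\<^sup>2) = 1" using C_pos unfolding C_def by simp
  have "sigma_min S \<le> (norm (\<Sum>v\<in>S. x v *\<^sub>R v))\<^sup>2"
    unfolding sigma_min_def using unit by (intro cInf_lower bdd_belowI[of _ 0]) auto
  also have "(\<Sum>v\<in>S. x v *\<^sub>R v) = (1 / sqrt C) *\<^sub>R (\<Sum>v\<in>S. c v *\<^sub>R v)"
    unfolding x_def scaleR_sum_right by simp
  also have "(norm \<dots>)\<^sup>2 = (norm (\<Sum>v\<in>S. c v *\<^sub>R v))\<^sup>2 / C"
    using C_pos by (simp add: power_mult_distrib power_divide)
  finally show ?thesis using C_pos unfolding C_def by (simp add: le_divide_eq)
qed simp

lemma sigma_min_mult_norm_proj_span_le:
  fixes S :: "(real^'m) set"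
  assumes "finite S"
  shows "sigma_min S * (norm (proj_span S e))\<^sup>2 \<le> (\<Sum>v\<in>S. (v \<bullet> e)\<^sup>2)"
proof -
  define p where "p = proj_span S e"
  define R where "R = (\<Sum>v\<in>S. (v \<bullet> e)\<^sup>2)"
  have R_nonneg: "0 \<le> R" unfolding R_def by (intro sum_nonneg) auto
  obtain c where p_eq: "p = (\<Sum>v\<in>S. c v *\<^sub>R v)"
    using span_finite[OF assms] proj_span_in_span[of S e] unfolding p_def by auto
  have "(norm p)\<^sup>2 = (\<Sum>v\<in>S. c v * (v \<bullet> e))"
    unfolding p_def inner_proj_span_self[symmetric] by (simp add: p_eq[unfolded p_def] inner_sum_left)
  then have CS: "((norm p)\<^sup>2)\<^sup>2 \<le> (\<Sum>v\<in>S. (c v)\<^sup>2) * R"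
    unfolding R_def by (simp add: Cauchy_Schwarz_ineq_sum)
  show ?thesis
  proof (cases "sigma_min S > 0 \<and> p \<noteq> 0")
    case True
    have "(norm p)\<^sup>2 * (sigma_min S * (norm p)\<^sup>2) \<le> sigma_min S * ((\<Sum>v\<in>S. (c v)\<^sup>2) * R)"
      using CS True by (simp add: power2_eq_square algebra_simps)
    also have "\<dots> \<le> (norm p)\<^sup>2 * R"
      using sigma_min_mult_sum_sq_le[of S c] R_nonneg unfolding p_eq[symmetric]
      by (simp add: mult.assoc[symmetric] mult_right_mono)
    finally show ?thesis using True unfolding p_def R_def by simp
  next
    case False
    then show ?thesis using R_nonneg unfolding p_def[symmetric] R_def[symmetric]
      by (auto intro: order_trans[OF mult_nonpos_nonneg])
  qed
qed

lemma ex_sum_le_card_mult: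
  fixes g :: "'a \<Rightarrow> real"
  assumes "finite S" and "S \<noteq> {}"
  shows "\<exists>v\<in>S. sum g S \<le> real (card S) * g v"
proof (rule ccontr)
  assume "\<not> ?thesis"
  then have "(\<Sum>v\<in>S. real (card S) * g v) < (\<Sum>v\<in>S. sum g S)"
    using assms by (intro sum_strict_mono) auto
  then show False by (simp add: sum_distrib_left)
qed

lemma f_mat_diff_sq_le:
  fixes A :: "real^'n^'m"
  assumes "f_mat A T \<le> f_mat A S"
  shows "(f_mat A S - f_mat A T)\<^sup>2
    \<le> 4 * f_mat A S * (\<Sum>j\<in>UNIV. (norm (proj_span S (column j A - proj_span T (column j A))))\<^sup>2)"
proof -
  let ?a = "\<lambda>j. proj_span S (column j A)"
  let ?e = "\<lambda>j. proj_span S (column j A - proj_span T (column j A))"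
  have "f_mat A S - f_mat A T
      = (\<Sum>j\<in>UNIV. (norm (?a j))\<^sup>2 - (norm (proj_span T (column j A)))\<^sup>2)"
    unfolding f_mat_eq_sum_columns by (rule sum_subtractf[symmetric])
  also have "\<dots> \<le> 2 * (\<Sum>j\<in>UNIV. norm (?a j) * norm (?e j))"
    unfolding sum_distrib_left
    by (intro sum_mono order_trans[OF norm_proj_span_diff_le]) (simp add: norm_cauchy_schwarz)
  finally have "(f_mat A S - f_mat A T)\<^sup>2 \<le> (2 * (\<Sum>j\<in>UNIV. norm (?a j) * norm (?e j)))\<^sup>2"
    using assms by (intro power_mono) auto
  also have "\<dots> = 4 * (\<Sum>j\<in>UNIV. norm (?a j) * norm (?e j))\<^sup>2"
    by (simp add: power_mult_distrib)
  also have "\<dots> \<le> 4 * (f_mat A S * (\<Sum>j\<in>UNIV. (norm (?e j))\<^sup>2))"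
    unfolding f_mat_eq_sum_columns by (simp add: Cauchy_Schwarz_ineq_sum)
  finally show ?thesis by simp
qed

lemma f_mat_insert_ge:
  fixes A :: "real^'n^'m"
  assumes "norm v \<le> 1"
  shows "(\<Sum>j\<in>UNIV. (v \<bullet> (column j A - proj_span T (column j A)))\<^sup>2)
    \<le> f_mat A (insert v T) - f_mat A T"
  unfolding f_mat_eq_sum_columns sum_subtractf[symmetric]
  by (intro sum_mono norm_proj_span_insert_ge assms)

theorem lemma1:
  fixes A :: "real^'n^'m" and S T :: "(real^'m) set"
  assumes "finite S" and "finite T" and "S \<noteq> {}"
    and "\<forall>v\<in>S. norm v = 1" and "\<forall>v\<in>T. norm v = 1"
    and "f_mat A S \<ge> f_mat A T" and "f_mat A S > 0"
  shows "\<exists>v\<in>S. f_mat A (T \<union> {v}) - f_mat A T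
           \<ge> sigma_min S * (f_mat A S - f_mat A T)^2 / (4 * real (card S) * f_mat A S)"
proof -
  define e where "e j = column j A - proj_span T (column j A)" for j
  define g where "g v = (\<Sum>j\<in>UNIV. (v \<bullet> e j)\<^sup>2)" for v
  define G where "G = (\<Sum>j\<in>UNIV. (norm (proj_span S (e j)))\<^sup>2)"
  obtain v where v: "v \<in> S" and g_v: "sum g S \<le> real (card S) * g v"
    using ex_sum_le_card_mult[OF assms(1,3)] by blast
  have "sigma_min S * G \<le> (\<Sum>j\<in>UNIV. \<Sum>u\<in>S. (u \<bullet> e j)\<^sup>2)"
    unfolding G_def sum_distrib_left
    by (intro sum_mono sigma_min_mult_norm_proj_span_le assms(1))
  also have "\<dots> = sum g S" unfolding g_def by (rule sum.swap)
  finally have sigma_G: "sigma_min S * G \<le> real (card S) * g v" using g_v by linarith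
  have "sigma_min S * (f_mat A S - f_mat A T)\<^sup>2 \<le> sigma_min S * (4 * f_mat A S * G)"
    using f_mat_diff_sq_le[OF assms(6)] sigma_min_nonneg[OF assms(1,3)]
    unfolding G_def e_def by (rule mult_left_mono)
  also have "\<dots> \<le> 4 * f_mat A S * (real (card S) * g v)"
    using sigma_G assms(7) by (simp add: mult.left_commute)
  finally have "sigma_min S * (f_mat A S - f_mat A T)\<^sup>2 / (4 * real (card S) * f_mat A S) \<le> g v"
    using assms(1,3,7) by (simp add: divide_le_eq card_gt_0_iff algebra_simps)
  moreover have "g v \<le> f_mat A (T \<union> {v}) - f_mat A T"
    using f_mat_insert_ge[of v A T] assms(4) v unfolding g_def e_def by simp
  ultimately show ?thesis using v by force
qed

end
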